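(* Let $\vec{k}=(k_1,\dots,k_n)$ be a vector of positive integers, let $\mathcal{K}$ be the set of all vectors obtained by permuting the entries of $\vec{k}$, and let $\mathcal{D}_{\mathcal{K}}=\bigcup_{\vec{k}'\in\mathcal{K}}\mathcal{D}_{\vec{k}'}$. For every $\overline{D}\in\mathcal{D}_{\mathcal{K}}$, with sweep map image $D=\Phi(\overline{D})$, we have $$\operatorname{dinv}(\overline{D})=\operatorname{area}(D)\qquad\text{and}\qquad \operatorname{area}(\overline{D})=\operatorname{bounce}(D).$$
   Context: For a vector $\vec{k}=(k_1,\dots,k_n)$ of positive integers put $|\vec{k}|=\sum_i k_i$. A $\vec{k}$-Dyck path is a word $D=\sigma_1\sigma_2\cdots\sigma_N$, $N=|\vec{k}|+n$, consisting of $n$ "red arrows" (north/up steps) and $|\vec{k}|$ "blue arrows" $W$ (east/down steps), where the $j$-th red arrow from the left is $S^{k_j}$, of length $\ell(S^{k_j})=k_j$; a red arrow $S^{k_j}$ has value $k_j$ and each $W$ has value $-1$. Define ranks $r_1=0$ and $r_{m+1}=r_m+(\text{value of }\sigma_m)$; it is required that $r_m\ge 0$ for all $m$ (then $r_{N+1}=0$). The starting rank of the step $\sigma_m$ is $r(\sigma_m)=r_m$ and its end rank is $\dot r(\sigma_m)=r_{m+1}$. Geometrically (model 3), $D$ is the lattice path from $(0,0)$ to $(N,0)$ never below the horizontal axis, with up steps $(1,k_j)$ and down steps $(1,-1)$, and ranks are the $y$-coordinates of starting points. Equivalently (model 1), $D$ is a lattice path from $(0,0)$ to $(|\vec{k}|,|\vec{k}|)$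 never below $y=x$, with north steps of lengths $k_1,\dots,k_n$ (bottom to top) and unit east steps; the rank of a vertex is $y-x$. Let $\mathcal{D}_{\vec{k}}$ be the set of $\vec{k}$-Dyck paths. For steps $A,B$ of $D$, write $A<B$ if $A$ is to the left of $B$, and $A<^sB$ (sweep order) if $r(A)<r(B)$, or $r(A)=r(B)$ and $B<A$. Sweep map: $\Phi(\overline{D})$ is the word obtained by listing the steps of $\overline{D}$ in increasing sweep order (bottom to top by starting rank, right to left at equal rank). For $\overline{D}\in\mathcal{D}_{\vec{k}}$, $\Phi(\overline{D})$ is a $\vec{k}'$-Dyck path for some rearrangement $\vec{k}'$ of $\vec{k}$, and $\Phi$ is a bijection of $\mathcal{D}_{\mathcal{K}}$ to itself. Area: $\operatorname{area}(D)=\sum_{S} r(S)$, summed over all red arrows $S$ of $D$. Dinv: $\operatorname{dinv}(D)$ is the sum of two parts. (1) Sweep dinv: the number of pairs $(W,S)$ with $W$ a blue arrow, $S$ a red arrow, $W<S$, such that $W$ sweeps $S$, i.e. $W$ intersects $S$ when $W$ is moved to the right past $S$ along a line of slope $\epsilon$, $0<\epsilon\ll1$; equivalently $r(S)\le r(W)\le \dot r(S)$. (2) Red dinv: $\sum_{S_i<S_j}\chi\big(r(S_i)\ge r(S_j)\ \&\ \dot r(S_j)>\dot r(S_i)\big)(\dot r(S_j)-\dot r(S_i))+\sum_{S_i<S_j}\chi\big(r(S_i)<r(S_j)\ \&\ \dot r(S_j)<\dot r(S_i)\big)(\dot r(S_i)-\dot r(S_j))$, over pairs of red arrows. Bounce: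 let $D$ be a $\vec{k}'$-Dyck path with red arrow lengths $k'_1,\dots,k'_n$ (left to right), $|\vec{k}'|=K$. For $0\le x<K$ let $N(x)$ be the number of red arrows preceding the $(x+1)$-st letter $W$ of $D$ (in model 1: the number of north steps before the unique east step starting at abscissa $x$). Build a tableau with $n$ columns, column $j$ having $k'_j+1$ cells whose entries are $t_j,t_j+1,\dots,t_j+k'_j$ from top to bottom, where the top entries $t_j$ are assigned as follows. Set $x_0=0$, $v_0=N(0)$, and give top entry $0$ to columns $1,\dots,v_0$. Recursively, for $i\ge0$, let $h_i$ be the number of cells with entry $i+1$ among the columns filled so far and $x_{i+1}=x_i+h_i$; if $x_{i+1}=K$, stop; otherwise let $v_{i+1}=N(x_{i+1})-N(x_i)$ and give top entry $i+1$ to columns $N(x_i)+1,\dots,N(x_{i+1})$. Then $\operatorname{bounce}(D)=\sum_{i\ge0} i\,v_i$, the sum of the top entries. *)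

theory Defs
  imports Main "HOL-Library.Multiset" "HOL-Library.Product_Lexorder"
begin

text \<open>A step of a path: a red arrow S^k (north/up step of length k) or a blue arrow W.\<close>
datatype step = Red nat | Blue

fun is_red :: "step \<Rightarrow> bool" where
  "is_red (Red _) = True" | "is_red Blue = False"

fun val :: "step \<Rightarrow> int" where
  "val (Red k) = int k" | "val Blue = -1"

definition red_lengths :: "step list \<Rightarrow> nat list" where
  "red_lengths D = [k. Red k \<leftarrow> D]"

text \<open>Starting rank of the step at (0-based) position m: r_{m+1} in the paper;
  rank D (length D) is the final rank.\<close>
definition rank :: "step list \<Rightarrow> nat \<Rightarrow> int" where
  "rank D m = sum_list (map val (take m D))"

definition erank :: "step list \<Rightarrow> nat \<Rightarrow> int" where
  "erank D m = rank D (Suc m)"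

definition is_kdyck :: "nat list \<Rightarrow> step list \<Rightarrow> bool" where
  "is_kdyck ks D \<longleftrightarrow> red_lengths D = ks \<and> count_list D Blue = sum_list ks
     \<and> (\<forall>m \<le> length D. rank D m \<ge> 0)"

definition Dyck_K :: "nat list \<Rightarrow> step list set" where
  "Dyck_K ks = {D. \<exists>ks'. mset ks' = mset ks \<and> is_kdyck ks' D}"

definition sweep :: "step list \<Rightarrow> step list" where
  "sweep D = map (\<lambda>m. D ! m) (sort_key (\<lambda>m. (rank D m, - int m)) [0..<length D])"

definition area :: "step list \<Rightarrow> int" where
  "area D = (\<Sum>m\<in>{m. m < length D \<and> is_red (D ! m)}. rank D m)"

definition sweep_dinv :: "step list \<Rightarrow> nat" where
  "sweep_dinv D = card {(i, j). i < j \<and> j < length D \<and> D ! i = Blue \<and> is_red (D ! j)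
      \<and> rank D j \<le> rank D i \<and> rank D i \<le> erank D j}"

definition red_dinv :: "step list \<Rightarrow> int" where
  "red_dinv D =
     (\<Sum>(i, j)\<in>{(i, j). i < j \<and> j < length D \<and> is_red (D ! i) \<and> is_red (D ! j)}.
        (if rank D i \<ge> rank D j \<and> erank D j > erank D i then erank D j - erank D i else 0)
      + (if rank D i < rank D j \<and> erank D j < erank D i then erank D i - erank D j else 0))"

definition dinv :: "step list \<Rightarrow> int" where
  "dinv D = int (sweep_dinv D) + red_dinv D"

text \<open>N(x): number of red arrows preceding the (x+1)-st letter W (x 0-based).\<close>
definition Nred :: "step list \<Rightarrow> nat \<Rightarrow> nat" where
  "Nred D x = (let p = filter (\<lambda>m. D ! m = Blue) [0..<length D] ! x
               in length (filter is_red (take p D)))"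

text \<open>State after stage i: (stopped, x_i, number of columns filled
  = N(x_i), top entries of columns (0-based column indices)).  Column j has cells with
  entries t_j, ..., t_j + k'_j.\<close>
fun bstate :: "step list \<Rightarrow> nat \<Rightarrow> bool \<times> nat \<times> nat \<times> (nat \<Rightarrow> nat)" where
  "bstate D 0 = (False, 0, Nred D 0, (\<lambda>j. 0))"
| "bstate D (Suc i) =
     (case bstate D i of (dn, x, c, t) \<Rightarrow>
        if dn then (dn, x, c, t)
        else (let h = card {j. j < c \<and> t j \<le> Suc i \<and> Suc i \<le> t j + red_lengths D ! j};
                  x' = x + h
              in if x' = sum_list (red_lengths D) then (True, x', c, t)
                 else (False, x', Nred D x',
                       (\<lambda>j. if c \<le> j \<and> j < Nred D x' then Suc i else t j))))"

definition bounce :: "step list \<Rightarrow> int" where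
  "bounce D = (case bstate D (LEAST i. fst (bstate D i)) of (dn, x, c, t) \<Rightarrow>
                 int (\<Sum>j < length (red_lengths D). t j))"

end

theory Submission
  imports Defs
begin

text \<open>
  Let \<open>S\<close> be a red arrow of \<open>D\<close> from rank \<open>a\<close> to rank
  \<open>b\<close>. Its rank in \<open>\<Phi>(D)\<close> is the sum of the values of the steps that
  sweep before it. Telescoping the level functions \<open>min x (a - 1)\<close> over all steps,
  \<open>[a \<le> x]\<close> over the steps right of \<open>S\<close> and
  \<open>max (a - 1) (min x b)\<close> over the steps left of \<open>S\<close> along the closed path
  \<open>D\<close> removes every blue step from this sum except the blue arrows sweeping
  \<open>S\<close>, and leaves one term for each other red arrow. The two terms of a pair of red
  arrows add up to their red dinv, so summing over \<open>S\<close> gives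
  \<open>dinv D = area \<Phi>(D)\<close>.

  As \<open>\<Phi>\<close> lists the steps by rank, the steps of \<open>\<Phi>(D)\<close> before its
  \<open>(B\<^sub>i + 1)\<close>-st blue arrow, \<open>B\<^sub>i\<close> being the number of blue
  arrows of \<open>D\<close> of rank at most \<open>i\<close>, are exactly the steps of
  \<open>D\<close> of rank at most \<open>i\<close>. So, by induction, stage \<open>i\<close> of the
  bounce construction on \<open>\<Phi>(D)\<close> has \<open>x\<^sub>i = B\<^sub>i\<close> and has
  filled the columns of the red arrows of rank at most \<open>i\<close>, each with its rank as top
  entry: the cells with entry \<open>i + 1\<close> belong to the red arrows crossing level
  \<open>i + 1\<close>, which are as many as the blue arrows starting there. Hence
  \<open>bounce \<Phi>(D)\<close> is the sum of the ranks of the red arrows of \<open>D\<close>,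
  that is \<open>area D\<close>.
\<close>

lemma sum_Collect_less_conj:
  "(\<Sum>m | m < (N::nat) \<and> P m. f m) = (\<Sum>m<N. if P m then f m else 0)"
  by (simp add: sum.inter_filter[symmetric] lessThan_def Collect_conj_eq)

lemma sum_pairs_less_eq_double_sum:
  "(\<Sum>(i, j) | i < j \<and> j < (N::nat) \<and> P i j. f i j) = (\<Sum>j<N. \<Sum>i<N. if i < j \<and> P i j then f i j else 0)"
proof -
  have "{(i, j). i < j \<and> j < N \<and> P i j} = {x \<in> {..<N} \<times> {..<N}. fst x < snd x \<and> P (fst x) (snd x)}"
    by auto
  then have "(\<Sum>(i, j) | i < j \<and> j < N \<and> P i j. f i j) = (\<Sum>i<N. \<Sum>j<N. if i < j \<and> P i j then f i j else 0)"
    by (simp add: sum.inter_filter sum.cartesian_product split_beta)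
  also have "\<dots> = (\<Sum>j<N. \<Sum>i<N. if i < j \<and> P i j then f i j else 0)"
    by (rule sum.swap)
  finally show ?thesis .
qed

lemma sum_off_diagonal_eq_sum_pairs:
  fixes F :: "nat \<Rightarrow> nat \<Rightarrow> 'a::comm_monoid_add"
  shows "(\<Sum>j<N. \<Sum>m<N. if m \<noteq> j then F m j else 0)
       = (\<Sum>j<N. \<Sum>m<N. if m < j then F m j + F j m else 0)"
proof -
  have "(\<Sum>j<N. \<Sum>m<N. if m \<noteq> j then F m j else 0)
      = (\<Sum>j<N. \<Sum>m<N. if m < j then F m j else 0) + (\<Sum>j<N. \<Sum>m<N. if j < m then F m j else 0)"
    by (simp only: sum.distrib[symmetric]) (intro sum.cong refl, auto)
  also have "(\<Sum>j<N. \<Sum>m<N. if j < m then F m j else 0) = (\<Sum>j<N. \<Sum>m<N. if m < j then F j m else 0)"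
    by (rule sum.swap)
  finally show ?thesis
    by (simp only: sum.distrib[symmetric]) (intro sum.cong refl, simp)
qed

lemma sum_nth_distinct:
  "distinct xs \<Longrightarrow> (\<Sum>p<length xs. f (xs ! p)) = (\<Sum>x\<in>set xs. f x)"
  by (rule sum.reindex_bij_betw[OF bij_betw_nth]) simp_all

lemma card_set_eq_card_positions:
  "distinct xs \<Longrightarrow> card {x \<in> set xs. P x} = card {p. p < length xs \<and> P (xs ! p)}"
  by (metis distinct_length_filter length_filter_conv_card Collect_conj_eq Int_commute Collect_mem_eq)

lemma card_prefix_closed_less_iff:
  assumes closed: "\<And>p q. p \<le> q \<Longrightarrow> q < n \<Longrightarrow> P q \<Longrightarrow> P p" and "j < n"
  shows "j < card {p. p < n \<and> P p} \<longleftrightarrow> P j"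
proof
  assume j: "j < card {p. p < n \<and> P p}"
  show "P j"
  proof (rule ccontr)
    assume "\<not> P j"
    then have "{p. p < n \<and> P p} \<subseteq> {..<j}"
      using closed[of j] by (auto simp: not_less[symmetric])
    then have "card {p. p < n \<and> P p} \<le> j"
      using card_mono[of "{..<j}"] by fastforce
    then show False using j by simp
  qed
next
  assume "P j"
  then have "{..j} \<subseteq> {p. p < n \<and> P p}"
    using closed \<open>j < n\<close> by auto
  then have "Suc j \<le> card {p. p < n \<and> P p}"
    using card_mono[of "{p. p < n \<and> P p}" "{..j}"] by simp
  then show "j < card {p. p < n \<and> P p}" by simp
qed

lemma set_take_sorted_wrt_less:
  fixes f :: "'a \<Rightarrow> 'b::linorder"
  assumes sorted: "sorted_wrt (\<lambda>x y. f x < f y) xs" and "j < length xs"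
  shows "set (take j xs) = {x \<in> set xs. f x < f (xs ! j)}"
proof (intro equalityI subsetI)
  fix x assume "x \<in> set (take j xs)"
  then obtain p where "p < j" "x = xs ! p"
    using \<open>j < length xs\<close> by (auto simp: in_set_conv_nth)
  then show "x \<in> {x \<in> set xs. f x < f (xs ! j)}"
    using assms by (auto simp: sorted_wrt_iff_nth_less)
next
  fix x assume "x \<in> {x \<in> set xs. f x < f (xs ! j)}"
  then obtain p where p: "p < length xs" "x = xs ! p" "f (xs ! p) < f (xs ! j)"
    by (auto simp: in_set_conv_nth)
  have "p < j"
  proof (rule ccontr)
    assume "\<not> p < j"
    then have "f (xs ! j) \<le> f (xs ! p)"
      using sorted p(1) by (cases "p = j") (auto simp: sorted_wrt_iff_nth_less less_imp_le)
    then show False using p(3) by simp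
  qed
  then show "x \<in> set (take j xs)"
    using p \<open>j < length xs\<close> by (auto simp: in_set_conv_nth)
qed

section \<open>Ranks and Dyck paths\<close>

fun arrow_length :: "step \<Rightarrow> nat" where
  "arrow_length (Red k) = k"
| "arrow_length Blue = 0"

lemma val_eq: "val s = (if is_red s then int (arrow_length s) else -1)"
  by (cases s) auto

lemma not_red_iff_Blue: "\<not> is_red s \<longleftrightarrow> s = Blue"
  by (cases s) auto

lemma red_lengths_eq: "red_lengths D = map arrow_length (filter is_red D)"
  by (induction D) (auto simp: red_lengths_def split: step.splits)

lemma sum_list_val: "sum_list (map val D) = int (sum_list (red_lengths D)) - int (count_list D Blue)"
  by (induction D) (auto simp: red_lengths_eq val_eq not_red_iff_Blue)

lemma rank_0 [simp]: "rank D 0 = 0"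
  by (simp add: rank_def)

lemma rank_Suc: "m < length D \<Longrightarrow> rank D (Suc m) = rank D m + val (D ! m)"
  by (simp add: rank_def take_Suc_conv_app_nth)

lemma rank_length: "rank D (length D) = sum_list (map val D)"
  by (simp add: rank_def)

lemma count_list_Blue_eq_card: "count_list D Blue = card {m. m < length D \<and> D ! m = Blue}"
  by (simp add: count_list_eq_length_filter length_filter_conv_card eq_commute)

definition dyck_path :: "step list \<Rightarrow> bool" where
  "dyck_path D \<longleftrightarrow> (\<forall>m \<le> length D. 0 \<le> rank D m) \<and> rank D (length D) = 0
     \<and> (\<forall>m < length D. is_red (D ! m) \<longrightarrow> 0 < arrow_length (D ! m))"

lemma dyck_path_if_mem_Dyck_K:
  assumes "\<forall>k \<in> set ks. 0 < k" and "D \<in> Dyck_K ks"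
  shows "dyck_path D"
proof -
  obtain ks' where ks': "mset ks' = mset ks" "is_kdyck ks' D"
    using assms(2) by (auto simp: Dyck_K_def)
  then have lengths: "set (red_lengths D) = set ks"
    by (metis is_kdyck_def set_mset_mset)
  have "0 < arrow_length (D ! m)" if "m < length D" "is_red (D ! m)" for m
  proof -
    have "arrow_length (D ! m) \<in> set (red_lengths D)"
      using that by (auto simp: red_lengths_eq)
    then show ?thesis using lengths assms(1) by auto
  qed
  moreover have "rank D (length D) = 0"
    using ks'(2) by (simp add: rank_length sum_list_val is_kdyck_def)
  ultimately show ?thesis
    using ks'(2) by (auto simp: dyck_path_def is_kdyck_def)
qed

lemma dyck_path_rank_nonneg: "dyck_path D \<Longrightarrow> m \<le> length D \<Longrightarrow> 0 \<le> rank D m"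
  by (simp add: dyck_path_def)

lemma dyck_path_rank_Suc_red:
  "dyck_path D \<Longrightarrow> m < length D \<Longrightarrow> is_red (D ! m) \<Longrightarrow> rank D m < rank D (Suc m)"
  by (auto simp: dyck_path_def rank_Suc val_eq)

lemma dyck_path_telescope:
  "dyck_path D \<Longrightarrow> (\<Sum>m<length D. \<phi> (rank D (Suc m)) - \<phi> (rank D m)) = (0 :: 'a::ab_group_add)"
  using sum_Suc_diff'[of 0 "length D" "\<lambda>m. \<phi> (rank D m)"]
  by (simp add: dyck_path_def atLeast0LessThan)

lemma card_Blue_at_level:
  assumes D: "dyck_path D"
  shows "card {m. m < length D \<and> D ! m = Blue \<and> rank D m = l}
       = card {m. m < length D \<and> is_red (D ! m) \<and> rank D m < l \<and> l \<le> rank D (Suc m)}"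
proof -
  let ?up = "\<lambda>m. is_red (D ! m) \<and> rank D m < l \<and> l \<le> rank D (Suc m)"
  let ?down = "\<lambda>m. D ! m = Blue \<and> rank D m = l"
  let ?above = "\<lambda>x. of_bool (l \<le> x) :: int"
  have "?above (rank D (Suc m)) - ?above (rank D m) = of_bool (?up m) - of_bool (?down m)"
    if "m < length D" for m
  proof (cases "is_red (D ! m)")
    case True
    then show ?thesis using dyck_path_rank_Suc_red[OF D that] by auto
  next
    case False
    then show ?thesis using that by (auto simp: not_red_iff_Blue rank_Suc)
  qed
  then have "(\<Sum>m<length D. of_bool (?up m) - of_bool (?down m) :: int) = 0"
    using dyck_path_telescope[OF D, of ?above] by simp
  then have "int (card ({..<length D} \<inter> {m. ?up m})) = int (card ({..<length D} \<inter> {m. ?down m}))"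
    by (simp add: sum_subtractf)
  then show ?thesis
    by (simp add: lessThan_def Collect_conj_eq[symmetric] conj_commute)
qed

lemma dyck_path_Nil_if_no_Blue:
  assumes D: "dyck_path D" and "count_list D Blue = 0"
  shows "D = []"
proof -
  have "sum_list (red_lengths D) = 0"
    using D assms(2) by (simp add: dyck_path_def rank_length sum_list_val)
  then have "arrow_length s = 0" if "s \<in> set D" "is_red s" for s
    using that by (simp add: red_lengths_eq)
  then have "s = Blue" if "s \<in> set D" for s
    using that D by (fastforce simp: dyck_path_def in_set_conv_nth simp flip: not_red_iff_Blue)
  moreover have "Blue \<notin> set D"
    using assms(2) by (simp add: count_list_0_iff)
  ultimately show ?thesis
    by (cases D) auto
qed

section \<open>The sweep order\<close>

definition sweep_key :: "step list \<Rightarrow> nat \<Rightarrow> int \<times> int" where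
  "sweep_key D m = (rank D m, - int m)"

definition sweep_order :: "step list \<Rightarrow> nat list" where
  "sweep_order D = sort_key (sweep_key D) [0..<length D]"

lemma sweep_eq: "sweep D = map ((!) D) (sweep_order D)"
  by (simp add: sweep_def sweep_order_def sweep_key_def[abs_def])

lemma length_sweep_order [simp]: "length (sweep_order D) = length D"
  by (simp add: sweep_order_def)

lemma set_sweep_order [simp]: "set (sweep_order D) = {..<length D}"
  by (auto simp: sweep_order_def)

lemma distinct_sweep_order: "distinct (sweep_order D)"
  by (simp add: sweep_order_def)

lemma length_sweep [simp]: "length (sweep D) = length D"
  by (simp add: sweep_eq)

lemma nth_sweep: "p < length D \<Longrightarrow> sweep D ! p = D ! (sweep_order D ! p)"
  by (simp add: sweep_eq)

lemma sweep_key_less_iff: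
  "sweep_key D m < sweep_key D j \<longleftrightarrow> rank D m < rank D j \<or> rank D m = rank D j \<and> j < m"
  by (auto simp: sweep_key_def less_prod_def)

lemma sorted_wrt_sweep_order: "sorted_wrt (\<lambda>m m'. sweep_key D m < sweep_key D m') (sweep_order D)"
proof -
  have "inj (sweep_key D)"
    by (rule injI) (simp add: sweep_key_def)
  then have "distinct (map (sweep_key D) (sweep_order D))"
    using inj_on_subset[OF _ subset_UNIV] by (simp add: distinct_map distinct_sweep_order)
  moreover have "sorted (map (sweep_key D) (sweep_order D))"
    by (simp add: sweep_order_def)
  ultimately have "sorted_wrt (<) (map (sweep_key D) (sweep_order D))"
    using strict_sorted_iff by blast
  then show ?thesis
    by (simp add: sorted_wrt_map)
qed

lemma set_take_sweep_order:
  "p < length D \<Longrightarrow> set (take p (sweep_order D))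
     = {m. m < length D \<and> sweep_key D m < sweep_key D (sweep_order D ! p)}"
  using set_take_sorted_wrt_less[OF sorted_wrt_sweep_order, of p D] by auto

definition sweep_rank :: "step list \<Rightarrow> nat \<Rightarrow> int" where
  "sweep_rank D j = (\<Sum>m | m < length D \<and> sweep_key D m < sweep_key D j. val (D ! m))"

lemma rank_sweep: "p < length D \<Longrightarrow> rank (sweep D) p = sweep_rank D (sweep_order D ! p)"
proof -
  assume p: "p < length D"
  have "rank (sweep D) p = sum_list (map (\<lambda>m. val (D ! m)) (take p (sweep_order D)))"
    by (simp add: rank_def sweep_eq take_map o_def)
  also have "\<dots> = (\<Sum>m\<in>set (take p (sweep_order D)). val (D ! m))"
    by (simp add: sum_list_distinct_conv_sum_set distinct_sweep_order)
  finally show ?thesis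
    using p by (simp add: set_take_sweep_order sweep_rank_def)
qed

lemma area_sweep: "area (sweep D) = (\<Sum>j<length D. if is_red (D ! j) then sweep_rank D j else 0)"
proof -
  have "area (sweep D) = (\<Sum>p<length D. if is_red (D ! (sweep_order D ! p))
      then sweep_rank D (sweep_order D ! p) else 0)"
    unfolding area_def sum_Collect_less_conj by (intro sum.cong) (simp_all add: nth_sweep rank_sweep)
  also have "\<dots> = (\<Sum>j<length D. if is_red (D ! j) then sweep_rank D j else 0)"
    using sum_nth_distinct[OF distinct_sweep_order, of "\<lambda>j. if is_red (D ! j) then sweep_rank D j else 0" D]
    by simp
  finally show ?thesis .
qed

lemma mset_sweep: "mset (sweep D) = mset D"
  by (simp add: sweep_eq sweep_order_def) (metis map_nth mset_map mset_upt)

lemma sum_red_lengths_sweep: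
  assumes "dyck_path D"
  shows "sum_list (red_lengths (sweep D)) = count_list D Blue"
proof -
  have "sum_list (map val (sweep D)) = sum_list (map val D)"
    by (metis mset_map mset_sweep sum_mset_sum_list)
  then have "sum_list (map val (sweep D)) = 0"
    using assms by (simp add: rank_length[symmetric] dyck_path_def)
  moreover have "count_list (sweep D) Blue = count_list D Blue"
    by (metis count_mset mset_sweep)
  ultimately show ?thesis
    by (simp add: sum_list_val)
qed

section \<open>Dinv and area\<close>

definition sweeping_blues :: "step list \<Rightarrow> nat \<Rightarrow> nat" where
  "sweeping_blues D j = card {i. i < j \<and> D ! i = Blue \<and> rank D j \<le> rank D i \<and> rank D i \<le> erank D j}"

lemma sweep_dinv_eq:
  "int (sweep_dinv D) = (\<Sum>j<length D. if is_red (D ! j) then int (sweeping_blues D j) else 0)"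
proof -
  have "int (sweep_dinv D) = (\<Sum>(i, j) | i < j \<and> j < length D \<and> D ! i = Blue \<and> is_red (D ! j)
      \<and> rank D j \<le> rank D i \<and> rank D i \<le> erank D j. 1)"
    by (simp add: sweep_dinv_def)
  also have "\<dots> = (\<Sum>j<length D. \<Sum>i<length D. if i < j \<and> D ! i = Blue \<and> is_red (D ! j)
      \<and> rank D j \<le> rank D i \<and> rank D i \<le> erank D j then 1 else 0)"
    by (rule sum_pairs_less_eq_double_sum)
  also have "\<dots> = (\<Sum>j<length D. if is_red (D ! j) then int (sweeping_blues D j) else 0)"
  proof (intro sum.cong refl)
    fix j assume "j \<in> {..<length D}"
    then have "{..<length D} \<inter> {i. i < j \<and> D ! i = Blue \<and> rank D j \<le> rank D i \<and> rank D i \<le> erank D j}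
        = {i. i < j \<and> D ! i = Blue \<and> rank D j \<le> rank D i \<and> rank D i \<le> erank D j}"
      by auto
    then show "(\<Sum>i<length D. if i < j \<and> D ! i = Blue \<and> is_red (D ! j)
        \<and> rank D j \<le> rank D i \<and> rank D i \<le> erank D j then 1 else 0)
      = (if is_red (D ! j) then int (sweeping_blues D j) else 0)"
      by (simp add: sweeping_blues_def of_bool_def[symmetric])
  qed
  finally show ?thesis .
qed

text \<open>The red dinv of red arrows from rank \<open>r\<close> to \<open>r'\<close> and from \<open>s\<close> to \<open>s'\<close>, the first
  to the left of the second.\<close>
definition pair_dinv :: "int \<Rightarrow> int \<Rightarrow> int \<Rightarrow> int \<Rightarrow> int" where
  "pair_dinv r r' s s' = (if s \<le> r \<and> r' < s' then s' - r' else 0) + (if r < s \<and> s' < r' then r' - s' else 0)"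

lemma red_dinv_eq:
  "red_dinv D = (\<Sum>j<length D. \<Sum>i<length D. if i < j \<and> is_red (D ! i) \<and> is_red (D ! j)
     then pair_dinv (rank D i) (erank D i) (rank D j) (erank D j) else 0)"
  unfolding red_dinv_def pair_dinv_def by (rule sum_pairs_less_eq_double_sum)

text \<open>The increment, along a step from rank \<open>x\<close> to \<open>x'\<close>, of the level functions \<open>min \<cdot> (a - 1)\<close>
  and, if the step lies to the right of a red arrow from \<open>a\<close> to \<open>b\<close>, \<open>[a \<le> \<cdot>]\<close>, otherwise
  \<open>max (a - 1) (min \<cdot> b)\<close>.\<close>
definition level_increment :: "int \<Rightarrow> int \<Rightarrow> bool \<Rightarrow> int \<Rightarrow> int \<Rightarrow> int" where
  "level_increment a b right x x' = (min x' (a - 1) - min x (a - 1))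
     + (if right then of_bool (a \<le> x') - of_bool (a \<le> x) else max (a - 1) (min x' b) - max (a - 1) (min x b))"

text \<open>What a red arrow from \<open>r\<close> to \<open>r'\<close> adds to the rank in the sweep image of a red arrow from
  \<open>s\<close> to \<open>s'\<close>, net of its level increments.\<close>
definition red_excess :: "int \<Rightarrow> int \<Rightarrow> bool \<Rightarrow> int \<Rightarrow> int \<Rightarrow> int" where
  "red_excess r r' right s s' = (if r < s \<or> r = s \<and> right then r' - r else 0) - level_increment s s' right r r'"

lemma red_excess_pair:
  "r < r' \<Longrightarrow> s < s' \<Longrightarrow> red_excess r r' False s s' + red_excess s s' True r r' = pair_dinv r r' s s'"
  unfolding red_excess_def level_increment_def pair_dinv_def by (auto simp: min_def max_def)

lemma sum_level_increments:
  assumes D: "dyck_path D" and j: "j < length D" "is_red (D ! j)"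
  shows "(\<Sum>m<length D. if m = j then 0
     else level_increment (rank D j) (rank D (Suc j)) (j < m) (rank D m) (rank D (Suc m))) = 0"
proof -
  define N a b where "N = length D" and "a = rank D j" and "b = rank D (Suc j)"
  have "0 \<le> a" "a < b"
    using dyck_path_rank_nonneg[OF D, of j] dyck_path_rank_Suc_red[OF D j] j
    by (simp_all add: a_def b_def)
  define \<phi>\<^sub>1 \<phi>\<^sub>2 \<phi>\<^sub>3 :: "int \<Rightarrow> int" where
    "\<phi>\<^sub>1 x = min x (a - 1)" and "\<phi>\<^sub>2 x = of_bool (a \<le> x)" and "\<phi>\<^sub>3 x = max (a - 1) (min x b)" for x
  define \<delta> where "\<delta> \<phi> m = \<phi> (rank D (Suc m)) - \<phi> (rank D m)" for \<phi> :: "int \<Rightarrow> int" and m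
  have final: "rank D N = 0"
    using D by (simp add: dyck_path_def N_def)
  have increment: "(if m = j then 0 else level_increment a b (j < m) (rank D m) (rank D (Suc m)))
      = \<delta> \<phi>\<^sub>1 m + (if j < m then \<delta> \<phi>\<^sub>2 m else 0) + (if m < j then \<delta> \<phi>\<^sub>3 m else 0)" for m
  proof (cases "m = j")
    case True
    then show ?thesis
      using \<open>a < b\<close> by (simp add: \<delta>_def \<phi>\<^sub>1_def flip: a_def b_def)
  next
    case False
    then show ?thesis
      by (auto simp: level_increment_def \<delta>_def \<phi>\<^sub>1_def \<phi>\<^sub>2_def \<phi>\<^sub>3_def)
  qed
  have "(\<Sum>m<N. \<delta> \<phi>\<^sub>1 m) = 0"
    using dyck_path_telescope[OF D] by (simp add: \<delta>_def N_def)
  moreover have "(\<Sum>m<N. if j < m then \<delta> \<phi>\<^sub>2 m else 0) = \<phi>\<^sub>2 0 - \<phi>\<^sub>2 b"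
  proof -
    have "{m \<in> {..<N}. j < m} = {Suc j..<N}" by auto
    then have "(\<Sum>m<N. if j < m then \<delta> \<phi>\<^sub>2 m else 0) = (\<Sum>m = Suc j..<N. \<delta> \<phi>\<^sub>2 m)"
      by (simp add: sum.inter_filter[symmetric])
    then show ?thesis
      using sum_Suc_diff'[of "Suc j" N "\<lambda>m. \<phi>\<^sub>2 (rank D m)"] j final by (simp add: \<delta>_def b_def N_def)
  qed
  moreover have "(\<Sum>m<N. if m < j then \<delta> \<phi>\<^sub>3 m else 0) = \<phi>\<^sub>3 a - \<phi>\<^sub>3 0"
  proof -
    have "{m \<in> {..<N}. m < j} = {0..<j}" using j by (auto simp: N_def)
    then have "(\<Sum>m<N. if m < j then \<delta> \<phi>\<^sub>3 m else 0) = (\<Sum>m = 0..<j. \<delta> \<phi>\<^sub>3 m)"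
      by (simp add: sum.inter_filter[symmetric])
    then show ?thesis
      using sum_Suc_diff'[of 0 j "\<lambda>m. \<phi>\<^sub>3 (rank D m)"] by (simp add: \<delta>_def a_def)
  qed
  ultimately have "(\<Sum>m<N. \<delta> \<phi>\<^sub>1 m + (if j < m then \<delta> \<phi>\<^sub>2 m else 0) + (if m < j then \<delta> \<phi>\<^sub>3 m else 0)) = 0"
    using \<open>0 \<le> a\<close> \<open>a < b\<close> by (simp only: sum.distrib) (simp add: \<phi>\<^sub>2_def \<phi>\<^sub>3_def)
  then show ?thesis
    unfolding increment[symmetric] a_def b_def N_def .
qed

lemma sweep_rank_split:
  assumes D: "dyck_path D" and j: "j < length D" "is_red (D ! j)"
  shows "sweep_rank D j = int (sweeping_blues D j) + (\<Sum>m<length D. if is_red (D ! m) \<and> m \<noteq> j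
    then red_excess (rank D m) (rank D (Suc m)) (j < m) (rank D j) (rank D (Suc j)) else 0)"
proof -
  define a b where "a = rank D j" and "b = rank D (Suc j)"
  define increment where
    "increment m = (if m = j then 0 else level_increment a b (j < m) (rank D m) (rank D (Suc m)))" for m
  \<comment> \<open>The level increments of a blue step from \<open>x\<close> to \<open>x - 1\<close> are \<open>-[x < a]\<close> and \<open>-[x = a]\<close>
    right of \<open>D ! j\<close>, \<open>-[x < a]\<close> and \<open>-[a \<le> x \<le> b]\<close> left of it; so it contributes nothing below.\<close>
  have "(if sweep_key D m < sweep_key D j then val (D ! m) else 0)
      - of_bool (m < j \<and> D ! m = Blue \<and> a \<le> rank D m \<and> rank D m \<le> b) - increment m
      = (if is_red (D ! m) \<and> m \<noteq> j then red_excess (rank D m) (rank D (Suc m)) (j < m) a b else 0)"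
    if m: "m < length D" for m
  proof (cases "is_red (D ! m)")
    case True
    then have "val (D ! m) = rank D (Suc m) - rank D m"
      using m by (simp add: rank_Suc)
    then show ?thesis
      using True by (auto simp: increment_def red_excess_def sweep_key_less_iff a_def b_def)
  next
    case False
    then have "D ! m = Blue" "rank D (Suc m) = rank D m - 1" "m \<noteq> j"
      using m j by (auto simp: not_red_iff_Blue rank_Suc)
    moreover have "0 \<le> rank D (Suc m)"
      using dyck_path_rank_nonneg[OF D, of "Suc m"] m by simp
    ultimately show ?thesis
      by (auto simp: increment_def level_increment_def sweep_key_less_iff a_def b_def)
  qed
  then have "(\<Sum>m<length D. (if sweep_key D m < sweep_key D j then val (D ! m) else 0)
      - of_bool (m < j \<and> D ! m = Blue \<and> a \<le> rank D m \<and> rank D m \<le> b) - increment m)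
    = (\<Sum>m<length D. if is_red (D ! m) \<and> m \<noteq> j then red_excess (rank D m) (rank D (Suc m)) (j < m) a b else 0)"
    by (intro sum.cong) auto
  moreover have "(\<Sum>m<length D. if sweep_key D m < sweep_key D j then val (D ! m) else 0) = sweep_rank D j"
    by (simp add: sweep_rank_def sum_Collect_less_conj)
  moreover have "(\<Sum>m<length D. of_bool (m < j \<and> D ! m = Blue \<and> a \<le> rank D m \<and> rank D m \<le> b))
      = int (sweeping_blues D j)"
  proof -
    have "{..<length D} \<inter> {m. m < j \<and> D ! m = Blue \<and> a \<le> rank D m \<and> rank D m \<le> b}
        = {m. m < j \<and> D ! m = Blue \<and> a \<le> rank D m \<and> rank D m \<le> b}"
      using j by auto
    then show ?thesis
      by (simp add: sweeping_blues_def erank_def a_def b_def)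
  qed
  moreover have "(\<Sum>m<length D. increment m) = 0"
    unfolding increment_def a_def b_def by (rule sum_level_increments[OF D j])
  ultimately show ?thesis
    unfolding a_def b_def by (simp add: sum_subtractf)
qed

lemma dinv_eq_area_sweep:
  assumes D: "dyck_path D"
  shows "dinv D = area (sweep D)"
proof -
  define R where "R m \<longleftrightarrow> is_red (D ! m)" for m
  define X where "X m j = (if R m \<and> R j
    then red_excess (rank D m) (rank D (Suc m)) (j < m) (rank D j) (rank D (Suc j)) else 0)" for m j
  have "area (sweep D) = (\<Sum>j<length D. (if R j then int (sweeping_blues D j) else 0)
      + (\<Sum>m<length D. if m \<noteq> j then X m j else 0))"
    unfolding area_sweep
  proof (intro sum.cong refl)
    fix j assume "j \<in> {..<length D}"
    then show "(if is_red (D ! j) then sweep_rank D j else 0) = (if R j then int (sweeping_blues D j) else 0)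
      + (\<Sum>m<length D. if m \<noteq> j then X m j else 0)"
      unfolding X_def R_def by (auto simp: sweep_rank_split[OF D] intro!: sum.cong sum.neutral)
  qed
  also have "\<dots> = int (sweep_dinv D) + (\<Sum>j<length D. \<Sum>m<length D. if m < j then X m j + X j m else 0)"
    by (simp add: sum.distrib sweep_dinv_eq sum_off_diagonal_eq_sum_pairs R_def)
  also have "(\<Sum>j<length D. \<Sum>m<length D. if m < j then X m j + X j m else 0) = red_dinv D"
    unfolding red_dinv_eq
  proof (intro sum.cong refl)
    fix j m assume "j \<in> {..<length D}" "m \<in> {..<length D}"
    then show "(if m < j then X m j + X j m else 0) = (if m < j \<and> is_red (D ! m) \<and> is_red (D ! j)
      then pair_dinv (rank D m) (erank D m) (rank D j) (erank D j) else 0)"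
      using red_excess_pair dyck_path_rank_Suc_red[OF D] by (auto simp: X_def R_def erank_def)
  qed
  finally show ?thesis
    by (simp add: dinv_def)
qed

section \<open>Area and bounce\<close>

definition red_sweep_order :: "step list \<Rightarrow> nat list" where
  "red_sweep_order D = filter (\<lambda>m. is_red (D ! m)) (sweep_order D)"

definition reds_upto :: "step list \<Rightarrow> nat \<Rightarrow> nat" where
  "reds_upto D i = card {m. m < length D \<and> is_red (D ! m) \<and> rank D m \<le> int i}"

definition blues_upto :: "step list \<Rightarrow> nat \<Rightarrow> nat" where
  "blues_upto D i = card {m. m < length D \<and> D ! m = Blue \<and> rank D m \<le> int i}"

definition top_entries :: "step list \<Rightarrow> nat \<Rightarrow> nat \<Rightarrow> nat" where
  "top_entries D i j = (if j < reds_upto D i then nat (rank D (red_sweep_order D ! j)) else 0)"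

lemma red_lengths_sweep: "red_lengths (sweep D) = map (\<lambda>m. arrow_length (D ! m)) (red_sweep_order D)"
  by (simp add: red_lengths_eq sweep_eq red_sweep_order_def filter_map o_def)

lemma distinct_red_sweep_order: "distinct (red_sweep_order D)"
  by (simp add: red_sweep_order_def distinct_sweep_order)

lemma set_red_sweep_order: "set (red_sweep_order D) = {m. m < length D \<and> is_red (D ! m)}"
  by (auto simp: red_sweep_order_def)

lemma length_red_sweep_order: "length (red_sweep_order D) = card {m. m < length D \<and> is_red (D ! m)}"
  using distinct_card[OF distinct_red_sweep_order, of D] by (simp add: set_red_sweep_order)

lemma rank_red_sweep_order_mono:
  assumes "p \<le> q" "q < length (red_sweep_order D)"
  shows "rank D (red_sweep_order D ! p) \<le> rank D (red_sweep_order D ! q)"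
proof (cases "p = q")
  case False
  have "sorted_wrt (\<lambda>m m'. sweep_key D m < sweep_key D m') (red_sweep_order D)"
    unfolding red_sweep_order_def by (rule sorted_wrt_filter[OF sorted_wrt_sweep_order])
  then have "sweep_key D (red_sweep_order D ! p) < sweep_key D (red_sweep_order D ! q)"
    using assms False by (simp add: sorted_wrt_iff_nth_less)
  then show ?thesis
    by (auto simp: sweep_key_less_iff)
qed simp

lemma less_reds_upto_iff:
  assumes "j < length (red_sweep_order D)"
  shows "j < reds_upto D i \<longleftrightarrow> rank D (red_sweep_order D ! j) \<le> int i"
proof -
  have "reds_upto D i = card {m \<in> set (red_sweep_order D). rank D m \<le> int i}"
    by (simp add: reds_upto_def set_red_sweep_order)
  also have "\<dots> = card {p. p < length (red_sweep_order D) \<and> rank D (red_sweep_order D ! p) \<le> int i}"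
    by (rule card_set_eq_card_positions[OF distinct_red_sweep_order])
  finally have reds: "reds_upto D i
      = card {p. p < length (red_sweep_order D) \<and> rank D (red_sweep_order D ! p) \<le> int i}" .
  have "rank D (red_sweep_order D ! p) \<le> int i"
    if "p \<le> q" "q < length (red_sweep_order D)" "rank D (red_sweep_order D ! q) \<le> int i" for p q
    using rank_red_sweep_order_mono[OF that(1,2)] that(3) by linarith
  then show ?thesis
    unfolding reds by (rule card_prefix_closed_less_iff[OF _ assms])
qed

lemma reds_upto_le: "reds_upto D i \<le> length (red_sweep_order D)"
  unfolding reds_upto_def length_red_sweep_order by (rule card_mono) auto

lemma Nred_at_Blue:
  assumes "q < length L" "L ! q = Blue"
  shows "Nred L (card {p. p < q \<and> L ! p = Blue}) = card {p. p < q \<and> is_red (L ! p)}"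
proof -
  let ?blues = "filter (\<lambda>m. L ! m = Blue)"
  have "[0..<length L] = [0..<q] @ q # [Suc q..<length L]"
    using upt_add_eq_append[of 0 q "length L - q"] upt_conv_Cons[of q "length L"] assms(1) by simp
  then have "?blues [0..<length L] ! length (?blues [0..<q]) = q"
    using assms(2) by (simp add: nth_append)
  moreover have "length (?blues [0..<q]) = card {p. p < q \<and> L ! p = Blue}"
    by (auto simp: length_filter_conv_card intro!: arg_cong[where f = card])
  moreover have "length (filter is_red (take q L)) = card {p. p < q \<and> is_red (L ! p)}"
    using assms(1) by (auto simp: length_filter_conv_card intro!: arg_cong[where f = card])
  ultimately show ?thesis
    by (simp add: Nred_def Let_def)
qed

lemma last_step_above_level:
  assumes D: "dyck_path D" and "m\<^sub>0 < length D" "int i < rank D m\<^sub>0"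
  obtains l where "l < length D" "D ! l = Blue" "rank D l = int i + 1"
    "\<And>m. l < m \<Longrightarrow> m < length D \<Longrightarrow> rank D m \<le> int i"
proof -
  define l where "l = Max {m. m < length D \<and> int i < rank D m}"
  have "l \<in> {m. m < length D \<and> int i < rank D m}"
    unfolding l_def by (rule Max_in) (use assms in auto)
  then have l: "l < length D" "int i < rank D l"
    by auto
  have right: "rank D m \<le> int i" if "l < m" "m < length D" for m
    using Max_ge[of "{m. m < length D \<and> int i < rank D m}" m] that by (fastforce simp: l_def)
  have "rank D (Suc l) \<le> int i"
  proof (cases "Suc l < length D")
    case False
    then have "Suc l = length D" using l(1) by simp
    then show ?thesis using D by (simp add: dyck_path_def)
  qed (simp add: right)
  then have "D ! l = Blue"
    using dyck_path_rank_Suc_red[OF D l(1)] l(2) not_red_iff_Blue by fastforce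
  then show thesis
    using that l right \<open>rank D (Suc l) \<le> int i\<close> by (simp add: rank_Suc)
qed

lemma Nred_sweep_blues_upto:
  assumes D: "dyck_path D" and less: "blues_upto D i < count_list D Blue"
  shows "Nred (sweep D) (blues_upto D i) = reds_upto D i"
proof -
  have "\<exists>m\<^sub>0 < length D. int i < rank D m\<^sub>0"
  proof (rule ccontr)
    assume "\<not> ?thesis"
    then have "rank D m \<le> int i" if "m < length D" for m
      using that by (meson not_less)
    then have "{m. m < length D \<and> D ! m = Blue \<and> rank D m \<le> int i} = {m. m < length D \<and> D ! m = Blue}"
      by auto
    then show False
      using less by (simp add: blues_upto_def count_list_Blue_eq_card)
  qed
  then obtain l where l: "l < length D" "D ! l = Blue" "rank D l = int i + 1"
    and right: "\<And>m. l < m \<Longrightarrow> m < length D \<Longrightarrow> rank D m \<le> int i"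
    using last_step_above_level[OF D] by blast
  have "l \<in> set (sweep_order D)"
    using l(1) by simp
  then obtain q where q: "q < length D" "sweep_order D ! q = l"
    by (auto simp: in_set_conv_nth simp del: set_sweep_order)
  have prefix: "set (take q (sweep_order D)) = {m. m < length D \<and> rank D m \<le> int i}"
    using q l(3) right by (fastforce simp: set_take_sweep_order sweep_key_less_iff)
  have count_prefix: "card {p. p < q \<and> P (sweep D ! p)} = card {m. m < length D \<and> P (D ! m) \<and> rank D m \<le> int i}"
    for P
  proof -
    have "card {p. p < q \<and> P (sweep D ! p)}
        = card {p. p < length (take q (sweep_order D)) \<and> P (D ! (take q (sweep_order D) ! p))}"
      using q by (auto simp: nth_sweep intro!: arg_cong[where f = card])
    also have "\<dots> = card {m \<in> set (take q (sweep_order D)). P (D ! m)}"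
      by (rule card_set_eq_card_positions[symmetric]) (simp add: distinct_sweep_order)
    finally show ?thesis
      by (simp add: prefix conj_ac)
  qed
  have "sweep D ! q = Blue"
    using q l(2) by (simp add: nth_sweep)
  then have "Nred (sweep D) (card {p. p < q \<and> sweep D ! p = Blue}) = card {p. p < q \<and> is_red (sweep D ! p)}"
    using Nred_at_Blue q(1) by simp
  then show ?thesis
    unfolding blues_upto_def reds_upto_def count_prefix[of "\<lambda>s. s = Blue"] count_prefix[of is_red] .
qed

lemma blues_upto_0:
  assumes D: "dyck_path D"
  shows "blues_upto D 0 = 0"
proof -
  have False if "m < length D" "D ! m = Blue" "rank D m \<le> 0" for m
  proof -
    have "rank D (Suc m) < 0"
      using that by (simp add: rank_Suc)
    then show False
      using dyck_path_rank_nonneg[OF D, of "Suc m"] that(1) by simp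
  qed
  then show ?thesis
    by (auto simp: blues_upto_def)
qed

lemma blues_upto_Suc:
  "blues_upto D (Suc i) = blues_upto D i + card {m. m < length D \<and> D ! m = Blue \<and> rank D m = int i + 1}"
proof -
  have "{m. m < length D \<and> D ! m = Blue \<and> rank D m \<le> int (Suc i)}
      = {m. m < length D \<and> D ! m = Blue \<and> rank D m \<le> int i}
        \<union> {m. m < length D \<and> D ! m = Blue \<and> rank D m = int i + 1}"
    by auto
  then show ?thesis
    unfolding blues_upto_def by (simp add: card_Un_disjoint disjoint_iff)
qed

lemma blues_upto_mono: "i \<le> i' \<Longrightarrow> blues_upto D i \<le> blues_upto D i'"
  unfolding blues_upto_def by (rule card_mono) auto

lemma blues_upto_le_count: "blues_upto D i \<le> count_list D Blue"
  unfolding blues_upto_def count_list_Blue_eq_card by (rule card_mono) auto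

lemma top_entries_0: "top_entries D 0 = (\<lambda>j. 0)"
proof
  fix j
  show "top_entries D 0 j = 0"
  proof (cases "j < reds_upto D 0")
    case True
    then have "j < length (red_sweep_order D)"
      using reds_upto_le less_le_trans by blast
    then have "rank D (red_sweep_order D ! j) \<le> 0"
      using True less_reds_upto_iff by fastforce
    then show ?thesis
      using True by (simp add: top_entries_def)
  qed (simp add: top_entries_def)
qed

lemma top_entries_Suc:
  "top_entries D (Suc i)
     = (\<lambda>j. if reds_upto D i \<le> j \<and> j < reds_upto D (Suc i) then Suc i else top_entries D i j)"
proof
  fix j
  have mono: "reds_upto D i \<le> reds_upto D (Suc i)"
    unfolding reds_upto_def by (rule card_mono) auto
  show "top_entries D (Suc i) j
      = (if reds_upto D i \<le> j \<and> j < reds_upto D (Suc i) then Suc i else top_entries D i j)"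
  proof (cases "j < reds_upto D (Suc i)")
    case True
    then have len: "j < length (red_sweep_order D)"
      using reds_upto_le less_le_trans by blast
    have le_Suc: "rank D (red_sweep_order D ! j) \<le> int (Suc i)"
      using True less_reds_upto_iff[OF len] by blast
    show ?thesis
    proof (cases "j < reds_upto D i")
      case False
      then have "rank D (red_sweep_order D ! j) = int (Suc i)"
        using le_Suc less_reds_upto_iff[OF len, of i] by simp
      then show ?thesis
        using True False by (simp add: top_entries_def)
    qed (simp add: top_entries_def True)
  qed (use mono in \<open>simp add: top_entries_def\<close>)
qed

lemma card_new_cells:
  assumes D: "dyck_path D"
  shows "card {j. j < reds_upto D i \<and> top_entries D i j \<le> Suc i
                  \<and> Suc i \<le> top_entries D i j + red_lengths (sweep D) ! j}
       = card {m. m < length D \<and> D ! m = Blue \<and> rank D m = int i + 1}"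
proof -
  let ?\<rho> = "red_sweep_order D"
  let ?crosses = "\<lambda>m. rank D m < int i + 1 \<and> int i + 1 \<le> rank D (Suc m)"
  have "j < reds_upto D i \<and> top_entries D i j \<le> Suc i \<and> Suc i \<le> top_entries D i j + red_lengths (sweep D) ! j
      \<longleftrightarrow> j < length ?\<rho> \<and> ?crosses (?\<rho> ! j)" for j
  proof (cases "j < length ?\<rho>")
    case True
    then have "?\<rho> ! j < length D" "is_red (D ! (?\<rho> ! j))"
      using nth_mem[OF True] by (auto simp: set_red_sweep_order)
    then have "0 \<le> rank D (?\<rho> ! j)"
      and "rank D (Suc (?\<rho> ! j)) = rank D (?\<rho> ! j) + int (arrow_length (D ! (?\<rho> ! j)))"
      using dyck_path_rank_nonneg[OF D] by (simp_all add: rank_Suc val_eq)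
    then show ?thesis
      using True less_reds_upto_iff[OF True, of i] by (auto simp: top_entries_def red_lengths_sweep)
  next
    case False
    then show ?thesis using reds_upto_le[of D i] by auto
  qed
  then have "card {j. j < reds_upto D i \<and> top_entries D i j \<le> Suc i
                  \<and> Suc i \<le> top_entries D i j + red_lengths (sweep D) ! j}
      = card {j. j < length ?\<rho> \<and> ?crosses (?\<rho> ! j)}"
    by simp
  also have "\<dots> = card {m \<in> set ?\<rho>. ?crosses m}"
    by (rule card_set_eq_card_positions[symmetric, OF distinct_red_sweep_order])
  also have "\<dots> = card {m. m < length D \<and> D ! m = Blue \<and> rank D m = int i + 1}"
    using card_Blue_at_level[OF D, of "int i + 1"] by (simp add: set_red_sweep_order conj_assoc)
  finally show ?thesis .
qed

lemma bstate_sweep: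
  assumes D: "dyck_path D"
  shows "blues_upto D i < count_list D Blue
    \<Longrightarrow> bstate (sweep D) i = (False, blues_upto D i, reds_upto D i, top_entries D i)"
proof (induction i)
  case 0
  then show ?case
    using Nred_sweep_blues_upto[OF D 0] by (simp add: blues_upto_0[OF D] top_entries_0)
next
  case (Suc i)
  have "blues_upto D i < count_list D Blue"
    using Suc.prems blues_upto_mono[of i "Suc i" D] by simp
  then show ?case
    using Suc.IH Suc.prems Nred_sweep_blues_upto[OF D Suc.prems]
    by (simp add: Let_def card_new_cells[OF D] blues_upto_Suc sum_red_lengths_sweep[OF D] top_entries_Suc)
qed

lemma bstate_sweep_stop:
  assumes D: "dyck_path D"
    and "blues_upto D i < count_list D Blue" "blues_upto D (Suc i) = count_list D Blue"
  shows "bstate (sweep D) (Suc i) = (True, count_list D Blue, reds_upto D i, top_entries D i)"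
  using assms bstate_sweep[OF D assms(2)]
  by (simp add: Let_def card_new_cells[OF D] blues_upto_Suc sum_red_lengths_sweep[OF D])

lemma rank_red_less_if_blues_upto_eq:
  assumes D: "dyck_path D" and all: "blues_upto D i = count_list D Blue"
    and m: "m < length D" "is_red (D ! m)"
  shows "rank D m < int i"
proof -
  have "{b. b < length D \<and> D ! b = Blue \<and> rank D b \<le> int i} = {b. b < length D \<and> D ! b = Blue}"
    using all by (intro card_subset_eq) (auto simp: blues_upto_def count_list_Blue_eq_card)
  then have blues_low: "rank D b \<le> int i" if "b < length D" "D ! b = Blue" for b
    using that by blast
  have "m \<in> {m'. m' < length D \<and> is_red (D ! m') \<and> rank D m' < rank D m + 1 \<and> rank D m + 1 \<le> rank D (Suc m')}"
    using m dyck_path_rank_Suc_red[OF D m] by simp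
  then have "card {b. b < length D \<and> D ! b = Blue \<and> rank D b = rank D m + 1} \<noteq> 0"
    unfolding card_Blue_at_level[OF D] by (auto simp: card_eq_0_iff)
  then obtain b where "b < length D" "D ! b = Blue" "rank D b = rank D m + 1"
    by (auto simp: card_eq_0_iff)
  then show ?thesis
    using blues_low by fastforce
qed

lemma blues_upto_stop:
  assumes D: "dyck_path D" and "count_list D Blue \<noteq> 0"
  obtains i where "blues_upto D i < count_list D Blue" "blues_upto D (Suc i) = count_list D Blue"
proof -
  define max_rank where "max_rank = nat (Max (rank D ` {..<length D}))"
  have "rank D m \<le> int max_rank" if "m < length D" for m
  proof -
    have "rank D m \<le> Max (rank D ` {..<length D})"
      using that by simp
    then show ?thesis
      by (simp add: max_rank_def)
  qed
  then have "blues_upto D max_rank = count_list D Blue"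
    unfolding blues_upto_def count_list_Blue_eq_card by (intro arg_cong[where f = card]) auto
  then have stop: "blues_upto D (LEAST i. blues_upto D i = count_list D Blue) = count_list D Blue"
    by (rule LeastI)
  obtain i where i: "(LEAST i. blues_upto D i = count_list D Blue) = Suc i"
  proof (cases "LEAST i. blues_upto D i = count_list D Blue")
    case 0
    then show ?thesis
      using stop assms(2) blues_upto_0[OF D] by simp
  qed
  have "blues_upto D i < count_list D Blue"
    using not_less_Least[of i "\<lambda>i. blues_upto D i = count_list D Blue"] i blues_upto_le_count[of D i]
    by simp
  then show thesis
    using that stop i by simp
qed

lemma Least_bstate_sweep:
  assumes D: "dyck_path D"
    and below: "blues_upto D i < count_list D Blue" and full: "blues_upto D (Suc i) = count_list D Blue"
  shows "(LEAST k. fst (bstate (sweep D) k)) = Suc i"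
proof (rule Least_equality)
  show "fst (bstate (sweep D) (Suc i))"
    using bstate_sweep_stop[OF D below full] by simp
next
  fix k assume "fst (bstate (sweep D) k)"
  moreover have "\<not> fst (bstate (sweep D) k)" if "k \<le> i"
    using bstate_sweep[OF D] blues_upto_mono[OF that, of D] below by simp
  ultimately show "Suc i \<le> k"
    by (meson not_less_eq_eq)
qed

lemma area_eq_bounce_sweep:
  assumes D: "dyck_path D"
  shows "area D = bounce (sweep D)"
proof (cases "count_list D Blue = 0")
  case True
  then show ?thesis
    using dyck_path_Nil_if_no_Blue[OF D] by (simp add: area_def bounce_def sweep_def red_lengths_def)
next
  case False
  then obtain i where below: "blues_upto D i < count_list D Blue"
    and full: "blues_upto D (Suc i) = count_list D Blue"
    using blues_upto_stop[OF D] by blast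
  have "bounce (sweep D) = (\<Sum>j<length (red_sweep_order D). int (top_entries D i j))"
    using Least_bstate_sweep[OF D below full] bstate_sweep_stop[OF D below full]
    by (simp add: bounce_def red_lengths_sweep)
  also have "\<dots> = (\<Sum>j<length (red_sweep_order D). rank D (red_sweep_order D ! j))"
  proof (intro sum.cong refl)
    fix j assume j: "j \<in> {..<length (red_sweep_order D)}"
    then have "red_sweep_order D ! j < length D" "is_red (D ! (red_sweep_order D ! j))"
      using nth_mem[of j "red_sweep_order D"] by (simp_all add: set_red_sweep_order)
    then have "rank D (red_sweep_order D ! j) < int (Suc i)" "0 \<le> rank D (red_sweep_order D ! j)"
      using rank_red_less_if_blues_upto_eq[OF D full] dyck_path_rank_nonneg[OF D] by auto
    then show "int (top_entries D i j) = rank D (red_sweep_order D ! j)"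
      using less_reds_upto_iff j by (simp add: top_entries_def)
  qed
  also have "\<dots> = (\<Sum>m\<in>set (red_sweep_order D). rank D m)"
    by (rule sum_nth_distinct[OF distinct_red_sweep_order])
  also have "\<dots> = area D"
    by (simp add: area_def set_red_sweep_order)
  finally show ?thesis
    by simp
qed

theorem theorem2p1:
  fixes ks :: "nat list" and Dbar :: "step list"
  assumes "\<forall>k \<in> set ks. k > 0"
    and "Dbar \<in> Dyck_K ks"
  shows "dinv Dbar = area (sweep Dbar) \<and> area Dbar = bounce (sweep Dbar)"
proof -
  have "dyck_path Dbar"
    using assms by (rule dyck_path_if_mem_Dyck_K)
  then show ?thesis
    using dinv_eq_area_sweep area_eq_bounce_sweep by simp
qed

end
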